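(* Let $\mathbb{K}$ be a field of characteristic zero. Let $f_1,\dots,f_m\in\mathbb{K}[X]$ be nonzero polynomials with $\deg f_i=d_i$, let $(\alpha_{i,j})\in\mathbb{Z}_{\ge0}^{m\times\ell}$, let $a_1,\dots,a_\ell\in\mathbb{K}$, and let \[P=\sum_{j=1}^\ell a_j\prod_{i=1}^m f_i^{\alpha_{i,j}}\in\mathbb{K}[X].\] Let $F\in\mathbb{K}[X]$ be irreducible and let $\mu_i=\operatorname{mult}_F(f_i)$. If $P\neq0$, then \[\operatorname{mult}_F(P)\le\max_{1\le j\le\ell}\ \sum_{i=1}^m\left(\mu_i\alpha_{i,j}+(d_i-\mu_i)\binom{\ell+1-j}{2}\right).\]
   Context: For polynomials $F$ and $P\neq0$, $\operatorname{mult}_F(P)$ denotes the multiplicity of $F$ as a factor of $P$, i.e. the largest integer $\mu$ such that $F^\mu$ divides $P$. *)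

theory Defs
  imports "HOL-Computational_Algebra.Polynomial"
begin

definition mult_poly :: "'a::field poly \<Rightarrow> 'a poly \<Rightarrow> nat" where
  "mult_poly F P = (GREATEST \<mu>. F ^ \<mu> dvd P)"

end

theory Submission
  imports "Jordan_Normal_Form.Determinant" "HOL-Computational_Algebra.Polynomial_Factorial" Defs
begin

text \<open>
  Among the subfamilies of the products \<open>g\<^sub>j = \<Prod>\<^sub>i f\<^sub>i ^ \<alpha>\<^sub>i\<^sub>j\<close> that still represent \<open>P\<close>,
  take one of least size: its members are linearly independent, its coefficients are nonzero, and
  it has \<open>r \<le> l + 1 - j\<^sub>0\<close> members, \<open>j\<^sub>0\<close> being its least index. Let \<open>W\<close> be its Wronskian for the
  derivation \<open>\<delta> = F L d/dX\<close>, where \<open>L = \<Prod>\<^sub>i f\<^sub>i\<close>. A triangular change of basis produces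
  polynomials of pairwise distinct degrees, whose Wronskian has a nonzero, Vandermonde-like top
  coefficient, so \<open>W \<noteq> 0\<close>. Each \<open>g\<^sub>j\<close> divides \<open>L g\<^sub>j'\<close> and hence all \<open>\<delta>\<^sup>k g\<^sub>j\<close>, so
  \<open>W = (\<Prod>\<^sub>j g\<^sub>j) Q\<close> with \<open>deg Q \<le> (r choose 2) (deg F + deg L - 1)\<close>. On the other hand \<open>\<delta>\<close>
  raises \<open>F\<close>-multiplicities by at least \<open>mult\<^sub>F L\<close>, and by Cramer's rule the column of \<open>g\<^sub>j\<^sub>0\<close>
  may be replaced by \<open>P\<close>; so \<open>F\<close> divides \<open>W\<close> at least
  \<open>mult\<^sub>F P + \<Sum>\<^sub>j\<^sub>\<noteq>\<^sub>j\<^sub>0 mult\<^sub>F g\<^sub>j + mult\<^sub>F L \<cdot> (r choose 2)\<close> times. Comparing the two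
  bounds on \<open>mult\<^sub>F Q\<close> gives the inequality at the index \<open>j\<^sub>0\<close>.
\<close>

section \<open>Multiplicity of an irreducible factor\<close>

lemma irreducible_degree_pos:
  fixes F :: "'a::field poly"
  assumes "irreducible F"
  shows "degree F > 0"
proof (rule ccontr)
  assume "\<not> degree F > 0"
  moreover have "F \<noteq> 0" using assms by auto
  ultimately have "is_unit F" by (simp add: is_unit_iff_degree)
  thus False using assms by auto
qed

lemma irreducible_power_dvd_imp_le_degree:
  fixes F x :: "'a::field poly"
  assumes "irreducible F" "x \<noteq> 0" "F ^ k dvd x"
  shows "k \<le> degree x"
proof -
  have "k * degree F \<le> degree x"
    using dvd_imp_degree_le[OF assms(3,2)] assms(1) by (auto simp: degree_power_eq)
  with irreducible_degree_pos[OF assms(1)] show ?thesis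
    by (metis le_trans mult.right_neutral mult_le_mono2 Suc_leI One_nat_def)
qed

lemma mult_poly_dvd:
  fixes F x :: "'a::field poly"
  assumes "irreducible F" "x \<noteq> 0"
  shows "F ^ mult_poly F x dvd x"
  unfolding mult_poly_def
  by (rule GreatestI_nat[of _ 0 "degree x"])
     (use irreducible_power_dvd_imp_le_degree[OF assms] in auto)

lemma mult_poly_geI:
  fixes F x :: "'a::field poly"
  assumes "irreducible F" "x \<noteq> 0" "F ^ k dvd x"
  shows "k \<le> mult_poly F x"
  unfolding mult_poly_def
  by (rule Greatest_le_nat[of _ k "degree x"])
     (use irreducible_power_dvd_imp_le_degree[OF assms(1,2)] assms(3) in auto)

lemma degree_mult_poly_le:
  fixes F x :: "'a::field poly"
  assumes "irreducible F" "x \<noteq> 0"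
  shows "mult_poly F x * degree F \<le> degree x"
  using dvd_imp_degree_le[OF mult_poly_dvd[OF assms] assms(2)] assms(1)
  by (auto simp: degree_power_eq)

lemma mult_poly_le_degree:
  fixes F x :: "'a::field poly"
  assumes "irreducible F" "x \<noteq> 0"
  shows "mult_poly F x \<le> degree x"
  by (rule irreducible_power_dvd_imp_le_degree[OF assms mult_poly_dvd[OF assms]])

lemma mult_poly_decompose:
  fixes F x :: "'a::field poly"
  assumes "irreducible F" "x \<noteq> 0"
  obtains x' where "x = F ^ mult_poly F x * x'" "\<not> F dvd x'"
proof -
  obtain x' where x': "x = F ^ mult_poly F x * x'"
    using mult_poly_dvd[OF assms] by (auto elim: dvdE)
  have "\<not> F dvd x'"
  proof
    assume "F dvd x'"
    hence "F ^ Suc (mult_poly F x) dvd x" by (subst x') (simp add: mult_dvd_mono)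
    from mult_poly_geI[OF assms this] show False by simp
  qed
  with x' that show ?thesis by blast
qed

lemma mult_poly_mult:
  fixes F x y :: "'a::field poly"
  assumes F: "irreducible F" and x: "x \<noteq> 0" and y: "y \<noteq> 0"
  shows "mult_poly F (x * y) = mult_poly F x + mult_poly F y"
proof (rule antisym)
  define a where "a = mult_poly F x"
  define b where "b = mult_poly F y"
  have xy: "x * y \<noteq> 0" using x y by simp
  obtain x' where x': "x = F ^ a * x'" "\<not> F dvd x'"
    using mult_poly_decompose[OF F x] unfolding a_def .
  obtain y' where y': "y = F ^ b * y'" "\<not> F dvd y'"
    using mult_poly_decompose[OF F y] unfolding b_def .
  show "mult_poly F (x * y) \<le> a + b"
  proof (rule ccontr)
    assume "\<not> ?thesis"
    hence "F ^ Suc (a + b) dvd x * y"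
      using mult_poly_dvd[OF F xy] by (meson dvd_trans le_imp_power_dvd not_less_eq_eq)
    moreover have "x * y = F ^ (a + b) * (x' * y')"
      using x'(1) y'(1) by (simp add: power_add algebra_simps)
    ultimately have "F ^ (a + b) * F dvd F ^ (a + b) * (x' * y')" by (simp add: mult.commute)
    hence "F dvd x' * y'" using F by (subst (asm) dvd_times_left_cancel_iff) auto
    thus False
      using field_poly_irreducible_imp_prime[OF F] x'(2) y'(2) by (simp add: prime_elem_dvd_mult_iff)
  qed
  show "a + b \<le> mult_poly F (x * y)"
    by (rule mult_poly_geI[OF F xy])
       (simp add: a_def b_def power_add mult_dvd_mono mult_poly_dvd[OF F x] mult_poly_dvd[OF F y])
qed

lemma mult_poly_prod:
  fixes F :: "'a::field poly"
  assumes F: "irreducible F" and "finite S" and "\<And>i. i \<in> S \<Longrightarrow> f i \<noteq> 0"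
  shows "mult_poly F (prod f S) = (\<Sum>i\<in>S. mult_poly F (f i))"
  using assms(2,3)
proof (induction S rule: finite_induct)
  case empty
  show ?case using mult_poly_le_degree[OF F, of 1] by simp
next
  case (insert x S)
  thus ?case by (simp add: mult_poly_mult[OF F])
qed

lemma mult_poly_power:
  fixes F :: "'a::field poly"
  assumes F: "irreducible F" and "x \<noteq> 0"
  shows "mult_poly F (x ^ n) = n * mult_poly F x"
  using mult_poly_prod[OF F, of "{..<n}" "\<lambda>_. x"] assms by simp

section \<open>Determinants of polynomial matrices\<close>

lemma coeff_mult_bounded_degrees:
  fixes p q :: "'a::comm_semiring_0 poly"
  assumes "degree p \<le> dp" "degree q \<le> dq"
  shows "coeff (p * q) (dp + dq) = coeff p dp * coeff q dq"
proof (cases "degree p = dp \<and> degree q = dq")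
  case True thus ?thesis using coeff_mult_degree_sum[of p q] by simp
next
  case False
  hence "degree p + degree q < dp + dq" using assms by auto
  hence "coeff (p*q) (dp+dq) = 0"
    by (meson coeff_eq_0 degree_mult_le le_less_trans)
  moreover have "coeff p dp * coeff q dq = 0"
  proof (cases "degree p = dp")
    case True
    hence "degree q < dq" using False assms by auto
    thus ?thesis by (simp add: coeff_eq_0)
  next
    case False
    hence "degree p < dp" using assms by auto
    thus ?thesis by (simp add: coeff_eq_0)
  qed
  ultimately show ?thesis by simp
qed

lemma coeff_prod_bounded_degrees:
  fixes f :: "'b \<Rightarrow> 'a::comm_semiring_1 poly"
  assumes "finite S" "\<And>i. i \<in> S \<Longrightarrow> degree (f i) \<le> d i"
  shows "coeff (prod f S) (sum d S) = (\<Prod>i\<in>S. coeff (f i) (d i))"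
  using assms
proof (induction S rule: finite_induct)
  case empty thus ?case by simp
next
  case (insert x F)
  have "degree (prod f F) \<le> sum d F"
    by (rule order.trans[OF degree_prod_sum_le[OF insert(1)]], rule sum_mono, simp add: insert)
  thus ?case using insert by (simp add: coeff_mult_bounded_degrees)
qed

lemma prod_dvd_det_mat:
  fixes A :: "nat \<Rightarrow> nat \<Rightarrow> 'a::comm_ring_1"
  assumes "\<And>k j. k < r \<Longrightarrow> j < r \<Longrightarrow> G j * H k dvd A k j"
  shows "prod G {0..<r} * prod H {0..<r} dvd det (mat r r (\<lambda>(k,j). A k j))"
proof -
  have "prod G {0..<r} * prod H {0..<r} dvd
      signof p * (\<Prod>k = 0..<r. mat r r (\<lambda>(k,j). A k j) $$ (k, p k))"
    if p: "p permutes {0..<r}" for p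
  proof -
    have "prod G {0..<r} * prod H {0..<r} = (\<Prod>k = 0..<r. G (p k) * H k)"
      using prod.permute[OF p, of G] by (simp add: prod.distrib comp_def)
    also have "\<dots> dvd (\<Prod>k = 0..<r. mat r r (\<lambda>(k,j). A k j) $$ (k, p k))"
      by (rule prod_dvd_prod, insert p assms, auto simp: permutes_in_image)
    finally show ?thesis by (rule dvd_mult)
  qed
  thus ?thesis by (subst det_def'[of _ r], auto intro!: dvd_sum)
qed

lemma degree_det_mat_le:
  fixes A :: "nat \<Rightarrow> nat \<Rightarrow> 'a::comm_ring_1 poly"
  assumes "\<And>k j. k < r \<Longrightarrow> j < r \<Longrightarrow> degree (A k j) \<le> a j + b k"
  shows "degree (det (mat r r (\<lambda>(k,j). A k j))) \<le> sum a {0..<r} + sum b {0..<r}"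
proof -
  have "degree (signof p * (\<Prod>k = 0..<r. mat r r (\<lambda>(k,j). A k j) $$ (k, p k)))
      \<le> sum a {0..<r} + sum b {0..<r}"
    if p: "p permutes {0..<r}" for p
  proof -
    have "degree (signof p * (\<Prod>k = 0..<r. mat r r (\<lambda>(k,j). A k j) $$ (k, p k)))
        \<le> degree (\<Prod>k = 0..<r. mat r r (\<lambda>(k,j). A k j) $$ (k, p k))"
      using degree_mult_le[of "signof p"] by (simp add: of_int_poly)
    also have "\<dots> \<le> (\<Sum>k = 0..<r. degree (mat r r (\<lambda>(k,j). A k j) $$ (k, p k)))"
      using degree_prod_sum_le[of "{0..<r}"] by (simp add: o_def)
    also have "\<dots> \<le> (\<Sum>k = 0..<r. a (p k) + b k)"
      by (rule sum_mono, insert p assms, auto simp: permutes_in_image)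
    also have "\<dots> = sum a {0..<r} + sum b {0..<r}"
      using sum.permute[OF p, of a] by (simp add: sum.distrib comp_def)
    finally show ?thesis .
  qed
  thus ?thesis by (subst det_def'[of _ r], auto intro!: degree_sum_le simp: finite_permutations)
qed

lemma coeff_det_mat:
  fixes A :: "nat \<Rightarrow> nat \<Rightarrow> 'a::comm_ring_1 poly"
  assumes "\<And>k j. k < r \<Longrightarrow> j < r \<Longrightarrow> degree (A k j) \<le> a j + b k"
  shows "coeff (det (mat r r (\<lambda>(k,j). A k j))) (sum a {0..<r} + sum b {0..<r})
     = det (mat r r (\<lambda>(k,j). coeff (A k j) (a j + b k)))"
proof -
  have "coeff (signof p * (\<Prod>k = 0..<r. mat r r (\<lambda>(k,j). A k j) $$ (k, p k)))
        (sum a {0..<r} + sum b {0..<r})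
     = signof p * (\<Prod>k = 0..<r. mat r r (\<lambda>(k,j). coeff (A k j) (a j + b k)) $$ (k, p k))"
    if p: "p permutes {0..<r}" for p
  proof -
    have e: "sum a {0..<r} + sum b {0..<r} = (\<Sum>k = 0..<r. a (p k) + b k)"
      using sum.permute[OF p, of a] by (simp add: sum.distrib comp_def)
    have "coeff (\<Prod>k = 0..<r. mat r r (\<lambda>(k,j). A k j) $$ (k, p k)) (\<Sum>k = 0..<r. a (p k) + b k)
        = (\<Prod>k = 0..<r. coeff (mat r r (\<lambda>(k,j). A k j) $$ (k, p k)) (a (p k) + b k))"
      by (rule coeff_prod_bounded_degrees, insert p assms, auto simp: permutes_in_image)
    also have "\<dots> = (\<Prod>k = 0..<r. mat r r (\<lambda>(k,j). coeff (A k j) (a j + b k)) $$ (k, p k))"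
      by (rule prod.cong, insert p, auto simp: permutes_in_image)
    finally show ?thesis unfolding e by (simp add: of_int_poly)
  qed
  thus ?thesis by (simp add: det_def'[of _ r] coeff_sum)
qed

section \<open>The derivation \<open>q \<cdot> d/dX\<close>\<close>

definition scaled_pderiv :: "'a::idom poly \<Rightarrow> 'a poly \<Rightarrow> 'a poly" where
  "scaled_pderiv q p = q * pderiv p"

lemma funpow_scaled_pderiv_sum:
  "(scaled_pderiv q ^^ k) (\<Sum>i\<in>S. smult (c i) (G i))
     = (\<Sum>i\<in>S. smult (c i) ((scaled_pderiv q ^^ k) (G i)))"
proof (induction k)
  case 0 thus ?case by simp
next
  case (Suc k)
  have "scaled_pderiv q (\<Sum>i\<in>S. smult (c i) (H i)) = (\<Sum>i\<in>S. smult (c i) (scaled_pderiv q (H i)))"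
    for H
    by (induction S rule: infinite_finite_induct)
       (auto simp: scaled_pderiv_def pderiv_add pderiv_smult algebra_simps)
  thus ?case using Suc by simp
qed

lemma power_Suc_dvd_imp_dvd_pderiv:
  fixes F p :: "'a::idom poly"
  assumes "F ^ Suc a dvd p"
  shows "F ^ a dvd pderiv p"
proof -
  obtain w where w: "p = F ^ Suc a * w" using assms by (auto elim: dvdE)
  have "pderiv p = F ^ Suc a * pderiv w + w * (smult (of_nat (Suc a)) (F ^ a) * pderiv F)"
    unfolding w pderiv_mult pderiv_power_Suc by simp
  moreover have "F ^ a dvd F ^ Suc a * pderiv w" by (simp add: dvd_mult2 le_imp_power_dvd)
  moreover have "F ^ a dvd w * (smult (of_nat (Suc a)) (F ^ a) * pderiv F)"
    by (intro dvd_mult dvd_mult2 dvd_smult dvd_refl)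
  ultimately show ?thesis by simp
qed

lemma power_dvd_scaled_pderiv:
  fixes F L p :: "'a::idom poly"
  assumes "F ^ \<mu> dvd L" "F ^ a dvd p"
  shows "F ^ (a + \<mu>) dvd scaled_pderiv (F * L) p"
proof (cases a)
  case 0
  thus ?thesis using assms by (simp add: scaled_pderiv_def dvd_mult2 dvd_mult)
next
  case (Suc b)
  have "F ^ b dvd pderiv p" using assms Suc power_Suc_dvd_imp_dvd_pderiv by blast
  hence "F * F ^ \<mu> * F ^ b dvd F * L * pderiv p" using assms by (intro mult_dvd_mono) auto
  thus ?thesis by (simp add: scaled_pderiv_def Suc power_add algebra_simps)
qed

lemma power_dvd_funpow_scaled_pderiv:
  fixes F L p :: "'a::idom poly"
  assumes "F ^ \<mu> dvd L" "F ^ a dvd p"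
  shows "F ^ (a + k * \<mu>) dvd (scaled_pderiv (F * L) ^^ k) p"
proof (induction k)
  case 0 thus ?case using assms by simp
next
  case (Suc k)
  from power_dvd_scaled_pderiv[OF assms(1) Suc.IH] show ?case by (simp add: algebra_simps)
qed

lemma dvd_funpow_scaled_pderiv_self:
  fixes q G :: "'a::idom poly"
  assumes "G dvd q * pderiv G"
  shows "G dvd (scaled_pderiv q ^^ k) G"
proof (induction k)
  case 0 thus ?case by simp
next
  case (Suc k)
  then obtain N where N: "(scaled_pderiv q ^^ k) G = G * N" by (auto elim: dvdE)
  obtain M where M: "q * pderiv G = G * M" using assms by (auto elim: dvdE)
  have "(scaled_pderiv q ^^ Suc k) G = q * pderiv G * N + q * G * pderiv N"
    by (simp add: N scaled_pderiv_def pderiv_mult algebra_simps)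
  also have "\<dots> = G * (M * N + q * pderiv N)" by (simp add: M algebra_simps)
  finally show ?case by simp
qed

lemma degree_scaled_pderiv_le:
  fixes q p :: "'a::{idom,semiring_char_0} poly"
  assumes "degree q \<ge> 1"
  shows "degree (scaled_pderiv q p) \<le> degree p + (degree q - 1)"
proof (cases "degree p = 0")
  case True
  hence "pderiv p = 0" by (simp add: pderiv_eq_0_iff)
  thus ?thesis by (simp add: scaled_pderiv_def)
next
  case False
  have "degree (scaled_pderiv q p) \<le> degree q + degree (pderiv p)"
    unfolding scaled_pderiv_def by (rule degree_mult_le)
  moreover have "degree (pderiv p) = degree p - 1" by (rule degree_pderiv)
  ultimately show ?thesis using False assms by linarith
qed

lemma degree_funpow_scaled_pderiv_le:
  fixes q p :: "'a::{idom,semiring_char_0} poly"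
  assumes "degree q \<ge> 1"
  shows "degree ((scaled_pderiv q ^^ k) p) \<le> degree p + k * (degree q - 1)"
proof (induction k)
  case 0 thus ?case by simp
next
  case (Suc k)
  thus ?case using degree_scaled_pderiv_le[OF assms, of "(scaled_pderiv q ^^ k) p"] by simp
qed

lemma coeff_scaled_pderiv:
  fixes q p :: "'a::{idom,semiring_char_0} poly"
  assumes "degree q \<ge> 1" "degree p \<le> e"
  shows "coeff (scaled_pderiv q p) (e + (degree q - 1)) = lead_coeff q * of_nat e * coeff p e"
proof (cases e)
  case 0
  hence "pderiv p = 0" using assms by (simp add: pderiv_eq_0_iff)
  thus ?thesis using 0 by (simp add: scaled_pderiv_def)
next
  case (Suc e')
  have dp: "degree (pderiv p) \<le> e'" using assms Suc by (simp add: degree_pderiv)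
  have "e + (degree q - 1) = degree q + e'" using Suc assms by simp
  hence "coeff (scaled_pderiv q p) (e + (degree q - 1)) = coeff q (degree q) * coeff (pderiv p) e'"
    unfolding scaled_pderiv_def using coeff_mult_bounded_degrees[OF order.refl dp] by simp
  thus ?thesis by (simp add: coeff_pderiv Suc algebra_simps)
qed

lemma coeff_funpow_scaled_pderiv:
  fixes q p :: "'a::{idom,semiring_char_0} poly"
  assumes "degree q \<ge> 1" "degree p \<le> e"
  shows "coeff ((scaled_pderiv q ^^ k) p) (e + k * (degree q - 1))
     = coeff p e * lead_coeff q ^ k * (\<Prod>i<k. of_nat (e + i * (degree q - 1)))"
proof (induction k)
  case 0 thus ?case by simp
next
  case (Suc k)
  define e' where "e' = e + k * (degree q - 1)"
  have "degree ((scaled_pderiv q ^^ k) p) \<le> e'"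
    using degree_funpow_scaled_pderiv_le[OF assms(1), of k p] assms(2) by (simp add: e'_def)
  hence "coeff (scaled_pderiv q ((scaled_pderiv q ^^ k) p)) (e' + (degree q - 1))
      = lead_coeff q * of_nat e' * coeff ((scaled_pderiv q ^^ k) p) e'"
    by (rule coeff_scaled_pderiv[OF assms(1)])
  moreover have "e' + (degree q - 1) = e + Suc k * (degree q - 1)" by (simp add: e'_def)
  ultimately show ?case using Suc by (simp add: e'_def algebra_simps)
qed

section \<open>Wronskians\<close>

definition lin_indep_polys :: "('b \<Rightarrow> 'a::field poly) \<Rightarrow> 'b set \<Rightarrow> bool" where
  "lin_indep_polys g S \<longleftrightarrow> (\<forall>c. (\<Sum>j\<in>S. smult (c j) (g j)) = 0 \<longrightarrow> (\<forall>j\<in>S. c j = 0))"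

lemma lin_indep_polys_subset:
  assumes "lin_indep_polys g T" "S \<subseteq> T" "finite T"
  shows "lin_indep_polys g S"
  unfolding lin_indep_polys_def
proof (intro allI impI ballI)
  fix c j assume c: "(\<Sum>j\<in>S. smult (c j) (g j)) = 0" and j: "j \<in> S"
  define c' where "c' i = (if i \<in> S then c i else 0)" for i
  have "(\<Sum>i\<in>T. smult (c' i) (g i)) = (\<Sum>i\<in>S. smult (c i) (g i))"
    using assms(2,3) by (intro sum.mono_neutral_cong_right) (auto simp: c'_def)
  hence "c' j = 0"
    using assms(1)[unfolded lin_indep_polys_def, rule_format, of c'] assms(2) c j by auto
  thus "c j = 0" using j by (simp add: c'_def)
qed

lemma lin_indep_polys_reindex:
  assumes "lin_indep_polys g S" "bij_betw \<sigma> T S"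
  shows "lin_indep_polys (g \<circ> \<sigma>) T"
  unfolding lin_indep_polys_def
proof (intro allI impI ballI)
  fix c i assume c: "(\<Sum>i\<in>T. smult (c i) ((g \<circ> \<sigma>) i)) = 0" and i: "i \<in> T"
  define c' where "c' = c \<circ> inv_into T \<sigma>"
  have "(\<Sum>j\<in>S. smult (c' j) (g j)) = (\<Sum>i\<in>T. smult (c' (\<sigma> i)) (g (\<sigma> i)))"
    by (rule sum.reindex_bij_betw[OF assms(2), symmetric])
  also have "\<dots> = 0"
    using c by (simp add: c'_def bij_betw_inv_into_left[OF assms(2)] cong: sum.cong)
  finally have "c' (\<sigma> i) = 0"
    using assms i unfolding lin_indep_polys_def by (meson bij_betwE)
  thus "c i = 0" using i by (simp add: c'_def bij_betw_inv_into_left[OF assms(2)])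
qed

lemma lin_indep_polys_distinct_degrees:
  fixes h :: "'b \<Rightarrow> 'a::field poly"
  assumes S: "finite S" and nz: "\<And>j. j \<in> S \<Longrightarrow> h j \<noteq> 0"
    and inj: "inj_on (\<lambda>j. degree (h j)) S"
  shows "lin_indep_polys h S"
  unfolding lin_indep_polys_def
proof (intro allI impI ballI, rule ccontr)
  fix c j assume sum0: "(\<Sum>j\<in>S. smult (c j) (h j)) = 0" and "j \<in> S" "c j \<noteq> 0"
  define K where "K = {j \<in> S. c j \<noteq> 0}"
  have K: "finite K" "K \<noteq> {}" using S \<open>j \<in> S\<close> \<open>c j \<noteq> 0\<close> by (auto simp: K_def)
  have "Max ((\<lambda>j. degree (h j)) ` K) \<in> (\<lambda>j. degree (h j)) ` K" using K by simp
  then obtain k where k: "k \<in> K" "degree (h k) = Max ((\<lambda>j. degree (h j)) ` K)" by auto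
  have lower: "c i * coeff (h i) (degree (h k)) = 0" if "i \<in> S - {k}" for i
  proof (cases "c i = 0")
    case False
    hence "degree (h i) \<le> degree (h k)" using that K k by (auto simp: K_def)
    moreover have "degree (h i) \<noteq> degree (h k)" using that k inj by (auto simp: K_def inj_on_def)
    ultimately show ?thesis by (simp add: coeff_eq_0)
  qed simp
  have "coeff (\<Sum>j\<in>S. smult (c j) (h j)) (degree (h k)) = (\<Sum>i\<in>S. c i * coeff (h i) (degree (h k)))"
    by (simp add: coeff_sum)
  also have "\<dots> = c k * lead_coeff (h k) + (\<Sum>i\<in>S - {k}. c i * coeff (h i) (degree (h k)))"
    using k(1) S by (intro sum.remove) (auto simp: K_def)
  also have "\<dots> = c k * lead_coeff (h k)"
    using lower by (simp add: sum.neutral)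
  finally show False using sum0 k(1) nz by (auto simp: K_def)
qed

text \<open>Up to the factor \<open>lead_coeff q ^ k\<close>, the products below are the coefficients of
  \<open>(q \<cdot> d/dX)\<^sup>k\<close> applied to \<open>X ^ e\<close> in degree \<open>e + k s\<close>, where \<open>s = deg q - 1\<close>.\<close>

lemma shifted_products_lin_indep:
  fixes e :: "nat \<Rightarrow> nat" and w :: "nat \<Rightarrow> 'a::field_char_0"
  assumes inj: "inj_on e {..<r}"
    and zero: "\<And>j. j < r \<Longrightarrow> (\<Sum>k<r. w k * (\<Prod>i<k. of_nat (e j + i * s))) = 0"
    and "k < r"
  shows "w k = 0"
proof -
  define \<phi> :: "nat \<Rightarrow> 'a poly" where "\<phi> k = (\<Prod>i<k. [:of_nat (i * s), 1:])" for k
  define \<Phi> where "\<Phi> = (\<Sum>k<r. smult (w k) (\<phi> k))"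
  have deg: "degree (\<phi> k) = k" for k
    unfolding \<phi>_def by (subst degree_prod_eq_sum_degree) auto
  have nz: "\<phi> k \<noteq> 0" for k
    using deg[of k] by (cases k) (auto simp: \<phi>_def)
  have "\<Phi> = 0"
  proof (rule ccontr)
    assume "\<Phi> \<noteq> 0"
    have "(\<lambda>j. of_nat (e j)) ` {..<r} \<subseteq> {x. poly \<Phi> x = 0}"
      using zero by (auto simp: \<Phi>_def \<phi>_def poly_sum poly_prod algebra_simps)
    hence "card ((\<lambda>j. of_nat (e j) :: 'a) ` {..<r}) \<le> degree \<Phi>"
      using card_mono[OF poly_roots_finite[OF \<open>\<Phi> \<noteq> 0\<close>]] card_poly_roots_bound[OF \<open>\<Phi> \<noteq> 0\<close>]
      by (meson order.trans)
    moreover have "card ((\<lambda>j. of_nat (e j) :: 'a) ` {..<r}) = r"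
      using inj by (subst card_image) (auto simp: inj_on_def)
    moreover have "degree \<Phi> \<le> r - 1"
      unfolding \<Phi>_def
      by (rule degree_sum_le) (auto intro: order.trans[OF degree_smult_le] simp: deg)
    ultimately show False using \<open>k < r\<close> by linarith
  qed
  moreover have "lin_indep_polys \<phi> {..<r}"
    by (rule lin_indep_polys_distinct_degrees) (use deg nz in \<open>auto simp: inj_on_def\<close>)
  ultimately show ?thesis using \<open>k < r\<close> unfolding lin_indep_polys_def \<Phi>_def by blast
qed

definition wronskian :: "'a::idom poly \<Rightarrow> (nat \<Rightarrow> 'a poly) \<Rightarrow> nat \<Rightarrow> 'a poly" where
  "wronskian q g r = det (mat r r (\<lambda>(k, j). (scaled_pderiv q ^^ k) (g j)))"

lemma wronskian_nonzero_if_distinct_degrees: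
  fixes h :: "nat \<Rightarrow> 'a::field_char_0 poly"
  assumes q: "degree q \<ge> 1" and nz: "\<And>j. j < r \<Longrightarrow> h j \<noteq> 0"
    and inj: "inj_on (\<lambda>j. degree (h j)) {..<r}"
  shows "wronskian q h r \<noteq> 0"
proof
  assume W0: "wronskian q h r = 0"
  define s where "s = degree q - 1"
  define M where "M = mat r r (\<lambda>(k, j). coeff ((scaled_pderiv q ^^ k) (h j)) (degree (h j) + k * s))"
  have "coeff (wronskian q h r) (sum (\<lambda>j. degree (h j)) {0..<r} + sum (\<lambda>k. k * s) {0..<r}) = det M"
    unfolding M_def wronskian_def
    by (rule coeff_det_mat, unfold s_def, rule degree_funpow_scaled_pderiv_le[OF q])
  hence "det (transpose_mat M) = 0"
    using W0 det_transpose[of M r] by (simp add: M_def)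
  then obtain v where v: "v \<in> carrier_vec r" "v \<noteq> 0\<^sub>v r" "transpose_mat M *\<^sub>v v = 0\<^sub>v r"
    using det_0_iff_vec_prod_zero_field[of "transpose_mat M" r] by (auto simp: M_def)
  have M_entry: "M $$ (k, j) = lead_coeff (h j) * (lead_coeff q ^ k * (\<Prod>i<k. of_nat (degree (h j) + i * s)))"
    if "k < r" "j < r" for k j
    using that coeff_funpow_scaled_pderiv[OF q order.refl, of k "h j"] by (simp add: M_def s_def)
  have zero: "(\<Sum>k<r. (v $ k * lead_coeff q ^ k) * (\<Prod>i<k. of_nat (degree (h j) + i * s))) = 0"
    if j: "j < r" for j
  proof -
    have "0 = (transpose_mat M *\<^sub>v v) $ j" by (subst v(3)) (use j in simp)
    also have "\<dots> = (\<Sum>k<r. M $$ (k, j) * v $ k)"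
      using v(1) j by (simp add: scalar_prod_def M_def lessThan_atLeast0)
    also have "\<dots> = lead_coeff (h j)
        * (\<Sum>k<r. (v $ k * lead_coeff q ^ k) * (\<Prod>i<k. of_nat (degree (h j) + i * s)))"
      by (simp add: M_entry j sum_distrib_left algebra_simps)
    finally show ?thesis using nz[OF j] by simp
  qed
  have "v $ k * lead_coeff q ^ k = 0" if "k < r" for k
    by (rule shifted_products_lin_indep[OF inj, where w = "\<lambda>k. v $ k * lead_coeff q ^ k"])
       (use zero that in auto)
  moreover have "q \<noteq> 0" using q by auto
  ultimately have "v = 0\<^sub>v r" using v(1) by (intro eq_vecI) auto
  with v(2) show False by simp
qed

lemma exists_remainder_avoiding_degrees:
  fixes h :: "nat \<Rightarrow> 'a::field poly"
  assumes nz: "\<And>i. i < r \<Longrightarrow> h i \<noteq> 0"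
  shows "\<exists>d. p - (\<Sum>i<r. smult (d i) (h i)) = 0 \<or>
     (\<forall>i<r. degree (p - (\<Sum>i<r. smult (d i) (h i))) \<noteq> degree (h i))"
proof (induction "degree p" arbitrary: p rule: less_induct)
  case less
  show ?case
  proof (cases "p = 0 \<or> (\<forall>i<r. degree p \<noteq> degree (h i))")
    case True
    thus ?thesis by (intro exI[of _ "\<lambda>_. 0"]) auto
  next
    case False
    then obtain i0 where i0: "i0 < r" "degree p = degree (h i0)" and "p \<noteq> 0" by auto
    define c where "c = lead_coeff p / lead_coeff (h i0)"
    define p1 where "p1 = p - smult c (h i0)"
    have shift: "(\<Sum>i<r. smult (d i + (if i = i0 then c else 0)) (h i))
       = (\<Sum>i<r. smult (d i) (h i)) + smult c (h i0)" for d
    proof -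
      have "(\<Sum>i<r. smult (if i = i0 then c else 0) (h i)) = smult c (h i0)"
        using i0 by (simp add: if_distrib[of "\<lambda>x. smult x _"] sum.delta cong: if_cong)
      thus ?thesis by (simp add: smult_add_left sum.distrib)
    qed
    show ?thesis
    proof (cases "p1 = 0")
      case True
      show ?thesis
        by (rule exI[of _ "\<lambda>i. 0 + (if i = i0 then c else 0)"], unfold shift)
           (use True in \<open>simp add: p1_def\<close>)
    next
      case False
      have "h i0 \<noteq> 0" using nz i0 by auto
      hence "lead_coeff (smult c (h i0)) = lead_coeff p" "degree (smult c (h i0)) = degree p"
        using \<open>p \<noteq> 0\<close> i0 by (auto simp: c_def) (metis leading_coeff_0_iff)
      hence "coeff p1 (degree p) = 0" "degree p1 \<le> degree p"
        unfolding p1_def using degree_diff_le_max[of p "smult c (h i0)"] by auto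
      hence "degree p1 < degree p"
        using False leading_coeff_neq_0[of p1] le_neq_implies_less by metis
      from less[OF this] obtain d where "p1 - (\<Sum>i<r. smult (d i) (h i)) = 0 \<or>
        (\<forall>i<r. degree (p1 - (\<Sum>i<r. smult (d i) (h i))) \<noteq> degree (h i))" by blast
      moreover have "p - (\<Sum>i<r. smult (d i + (if i = i0 then c else 0)) (h i))
          = p1 - (\<Sum>i<r. smult (d i) (h i))"
        unfolding shift p1_def by simp
      ultimately show ?thesis by (intro exI[of _ "\<lambda>i. d i + (if i = i0 then c else 0)"]) simp
    qed
  qed
qed

lemma smult_sum_right: "smult a (\<Sum>i\<in>S. f i) = (\<Sum>i\<in>S. smult a (f i))"
  by (induction S rule: infinite_finite_induct) (auto simp: smult_add_right)

lemma lin_indep_polys_imp_distinct_degree_combinations: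
  fixes g :: "nat \<Rightarrow> 'a::field poly"
  assumes "lin_indep_polys g {..<r}"
  shows "\<exists>h C. (\<forall>i<r. h i \<noteq> 0) \<and> inj_on (\<lambda>i. degree (h i)) {..<r}
            \<and> (\<forall>i<r. h i = (\<Sum>j<r. smult (C i j) (g j)))"
  using assms
proof (induction r)
  case 0 thus ?case by auto
next
  case (Suc r)
  have "lin_indep_polys g {..<r}" using Suc.prems by (rule lin_indep_polys_subset) auto
  from Suc.IH[OF this] obtain h C where h_nz: "\<forall>i<r. h i \<noteq> 0"
    and h_inj: "inj_on (\<lambda>i. degree (h i)) {..<r}"
    and h_comb: "\<forall>i<r. h i = (\<Sum>j<r. smult (C i j) (g j))" by blast
  obtain d where d: "g r - (\<Sum>i<r. smult (d i) (h i)) = 0 \<or>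
     (\<forall>i<r. degree (g r - (\<Sum>i<r. smult (d i) (h i))) \<noteq> degree (h i))"
    using exists_remainder_avoiding_degrees[of r h "g r"] h_nz by blast
  define hr where "hr = g r - (\<Sum>i<r. smult (d i) (h i))"
  define Cr where "Cr j = (if j = r then 1 else - (\<Sum>i<r. d i * C i j))" for j
  have "(\<Sum>i<r. smult (d i) (h i)) = (\<Sum>i<r. \<Sum>j<r. smult (d i * C i j) (g j))"
    using h_comb by (simp add: smult_sum_right)
  also have "\<dots> = (\<Sum>j<r. smult (\<Sum>i<r. d i * C i j) (g j))"
    by (subst sum.swap) (simp add: smult_sum)
  finally have comb: "(\<Sum>i<r. smult (d i) (h i)) = (\<Sum>j<r. smult (\<Sum>i<r. d i * C i j) (g j))" .
  have "(\<Sum>j<r. smult (Cr j) (g j)) = - (\<Sum>j<r. smult (\<Sum>i<r. d i * C i j) (g j))"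
    unfolding sum_negf[symmetric] by (rule sum.cong) (simp_all add: Cr_def)
  hence hr_comb: "hr = (\<Sum>j<Suc r. smult (Cr j) (g j))"
    by (simp add: hr_def Cr_def comb)
  have "hr \<noteq> 0"
  proof
    assume "hr = 0"
    hence "Cr r = 0"
      using Suc.prems hr_comb unfolding lin_indep_polys_def by simp
    thus False by (simp add: Cr_def)
  qed
  define h' where "h' = h(r := hr)"
  define C' where "C' i j = (if i = r then Cr j else if j < r then C i j else 0)" for i j
  have "\<forall>i<Suc r. h' i \<noteq> 0"
    using h_nz \<open>hr \<noteq> 0\<close> by (auto simp: h'_def less_Suc_eq)
  moreover have "inj_on (\<lambda>i. degree (h' i)) {..<Suc r}"
  proof -
    have "degree (h' r) \<notin> (\<lambda>i. degree (h' i)) ` {..<r}"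
      using d \<open>hr \<noteq> 0\<close> by (auto simp: h'_def hr_def)
    moreover have "inj_on (\<lambda>i. degree (h' i)) {..<r}"
      using h_inj by (auto simp: h'_def inj_on_def)
    ultimately show ?thesis by (simp add: lessThan_Suc)
  qed
  moreover have "\<forall>i<Suc r. h' i = (\<Sum>j<Suc r. smult (C' i j) (g j))"
    using h_comb hr_comb by (auto simp: h'_def C'_def less_Suc_eq)
  ultimately show ?case by blast
qed

lemma wronskian_lin_comb:
  assumes "\<And>i. i < r \<Longrightarrow> h i = (\<Sum>j<r. smult (C i j) (g j))"
  shows "wronskian q h r = wronskian q g r * det (mat r r (\<lambda>(j, i). [:C i j:]))"
proof -
  define Wg where "Wg = mat r r (\<lambda>(k, j). (scaled_pderiv q ^^ k) (g j))"
  define Cm where "Cm = mat r r (\<lambda>(j, i). [:C i j:])"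
  have "mat r r (\<lambda>(k, j). (scaled_pderiv q ^^ k) (h j)) = Wg * Cm"
  proof (rule eq_matI)
    fix k i assume "k < dim_row (Wg * Cm)" "i < dim_col (Wg * Cm)"
    hence k: "k < r" and i: "i < r" by (auto simp: Wg_def Cm_def)
    have "(Wg * Cm) $$ (k, i) = (\<Sum>j = 0..<r. (scaled_pderiv q ^^ k) (g j) * [:C i j:])"
      using k i by (simp add: Wg_def Cm_def scalar_prod_def)
    also have "\<dots> = (\<Sum>j<r. smult (C i j) ((scaled_pderiv q ^^ k) (g j)))"
      by (simp add: lessThan_atLeast0 mult.commute)
    also have "\<dots> = (scaled_pderiv q ^^ k) (h i)" using assms i by (simp add: funpow_scaled_pderiv_sum)
    finally show "mat r r (\<lambda>(k, j). (scaled_pderiv q ^^ k) (h j)) $$ (k, i) = (Wg * Cm) $$ (k, i)"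
      using k i by simp
  qed (auto simp: Wg_def Cm_def)
  moreover have "det (Wg * Cm) = det Wg * det Cm"
    by (rule det_mult[of Wg r Cm]) (auto simp: Wg_def Cm_def)
  ultimately show ?thesis by (simp add: wronskian_def Wg_def Cm_def)
qed

lemma wronskian_nonzero:
  fixes g :: "nat \<Rightarrow> 'a::field_char_0 poly"
  assumes "degree q \<ge> 1" "lin_indep_polys g {..<r}"
  shows "wronskian q g r \<noteq> 0"
proof -
  obtain h C where "\<forall>i<r. h i \<noteq> 0" "inj_on (\<lambda>i. degree (h i)) {..<r}"
    and h_comb: "\<forall>i<r. h i = (\<Sum>j<r. smult (C i j) (g j))"
    using lin_indep_polys_imp_distinct_degree_combinations[OF assms(2)] by blast
  hence "wronskian q h r \<noteq> 0" using assms(1) by (intro wronskian_nonzero_if_distinct_degrees) auto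
  thus ?thesis using wronskian_lin_comb[of r h C g q] h_comb by auto
qed

lemma wronskian_cramer:
  fixes G :: "nat \<Rightarrow> 'a::idom poly"
  assumes "i0 < r"
  shows "wronskian q (G(i0 := (\<Sum>i<r. smult (B i) (G i)))) r = [:B i0:] * wronskian q G r"
proof -
  define W where "W = mat r r (\<lambda>(k, j). (scaled_pderiv q ^^ k) (G j))"
  define x where "x = vec r (\<lambda>i. [:B i:])"
  have "replace_col W (W *\<^sub>v x) i0
      = mat r r (\<lambda>(k, j). (scaled_pderiv q ^^ k) ((G(i0 := (\<Sum>i<r. smult (B i) (G i)))) j))"
  proof (rule eq_matI)
    fix k j assume "k < dim_row (mat r r (\<lambda>(k, j). (scaled_pderiv q ^^ k)
      ((G(i0 := (\<Sum>i<r. smult (B i) (G i)))) j)))"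
      "j < dim_col (mat r r (\<lambda>(k, j). (scaled_pderiv q ^^ k)
      ((G(i0 := (\<Sum>i<r. smult (B i) (G i)))) j)))"
    hence k: "k < r" and j: "j < r" by auto
    have "(W *\<^sub>v x) $ k = (\<Sum>i = 0..<r. (scaled_pderiv q ^^ k) (G i) * [:B i:])"
      using k by (simp add: W_def x_def scalar_prod_def)
    also have "\<dots> = (scaled_pderiv q ^^ k) (\<Sum>i<r. smult (B i) (G i))"
      by (simp add: lessThan_atLeast0 mult.commute funpow_scaled_pderiv_sum)
    finally show "replace_col W (W *\<^sub>v x) i0 $$ (k, j) = mat r r (\<lambda>(k, j). (scaled_pderiv q ^^ k)
      ((G(i0 := (\<Sum>i<r. smult (B i) (G i)))) j)) $$ (k, j)"
      using k j by (simp add: replace_col_def W_def)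
  qed (auto simp: replace_col_def W_def)
  moreover have "det (replace_col W (W *\<^sub>v x) i0) = [:B i0:] * det W"
    using cramer_lemma_mat[of W r x i0] assms by (simp add: W_def x_def)
  ultimately show ?thesis by (simp add: wronskian_def W_def)
qed

lemma sum_mult_eq_choose_2: "(\<Sum>k = 0..<r. k * c) = (r choose 2) * (c::nat)"
proof (induction r)
  case (Suc r)
  have "Suc r choose 2 = r + (r choose 2)"
    using binomial_Suc_Suc[of r 1] by (simp add: numeral_2_eq_2)
  thus ?case using Suc by (simp add: algebra_simps)
qed simp

lemma power_dvd_wronskian:
  fixes F L :: "'a::idom poly"
  assumes "F ^ \<mu> dvd L" "\<And>j. j < r \<Longrightarrow> F ^ m j dvd G j"
  shows "F ^ (sum m {0..<r} + \<mu> * (r choose 2)) dvd wronskian (F * L) G r"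
proof -
  have "(\<Prod>j = 0..<r. F ^ m j) * (\<Prod>k = 0..<r. F ^ (k * \<mu>))
      dvd det (mat r r (\<lambda>(k, j). (scaled_pderiv (F * L) ^^ k) (G j)))"
    using power_dvd_funpow_scaled_pderiv[OF assms(1) assms(2)]
    by (intro prod_dvd_det_mat) (simp add: power_add)
  thus ?thesis
    by (simp add: wronskian_def power_sum[symmetric] power_add[symmetric] sum_mult_eq_choose_2 mult.commute)
qed

lemma prod_dvd_wronskian:
  assumes "\<And>j. j < r \<Longrightarrow> G j dvd q * pderiv (G j)"
  shows "prod G {0..<r} dvd wronskian q G r"
  using prod_dvd_det_mat[of r G "\<lambda>_. 1"] dvd_funpow_scaled_pderiv_self[OF assms]
  by (simp add: wronskian_def)

lemma degree_wronskian_le: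
  fixes q :: "'a::field_char_0 poly"
  assumes "degree q \<ge> 1"
  shows "degree (wronskian q G r) \<le> (\<Sum>j = 0..<r. degree (G j)) + (r choose 2) * (degree q - 1)"
  using degree_det_mat_le[of r "\<lambda>k j. (scaled_pderiv q ^^ k) (G j)" "\<lambda>j. degree (G j)"
      "\<lambda>k. k * (degree q - 1)"] degree_funpow_scaled_pderiv_le[OF assms]
  by (simp add: wronskian_def sum_mult_eq_choose_2)

section \<open>The multiplicity bound\<close>

lemma mult_poly_wronskian_bound:
  fixes F L P :: "'a::field_char_0 poly" and G :: "nat \<Rightarrow> 'a poly"
  assumes F: "irreducible F" and FL: "F ^ \<mu> dvd L" and "L \<noteq> 0"
    and indep: "lin_indep_polys G {..<r}"
    and G_dvd: "\<And>j. j < r \<Longrightarrow> G j dvd L * pderiv (G j)"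
    and G_nz: "\<And>j. j < r \<Longrightarrow> G j \<noteq> 0"
    and P: "P = (\<Sum>i<r. smult (B i) (G i))" and i0: "i0 < r" "B i0 \<noteq> 0" and "P \<noteq> 0"
  shows "degree F * (mult_poly F P + \<mu> * (r choose 2))
     \<le> degree F * mult_poly F (G i0) + (r choose 2) * (degree F + degree L - 1)"
proof -
  define q where "q = F * L"
  have "F \<noteq> 0" using F by auto
  hence deg_q: "degree q = degree F + degree L" using \<open>L \<noteq> 0\<close> by (simp add: q_def degree_mult_eq)
  hence "degree q \<ge> 1" using irreducible_degree_pos[OF F] by simp
  define W where "W = wronskian q G r"
  have "W \<noteq> 0" unfolding W_def by (rule wronskian_nonzero[OF \<open>degree q \<ge> 1\<close> indep])
  have "prod G {0..<r} dvd W"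
    unfolding W_def q_def by (rule prod_dvd_wronskian) (simp add: G_dvd mult.assoc dvd_mult)
  then obtain Q where Q: "W = prod G {0..<r} * Q" by (elim dvdE)
  have "Q \<noteq> 0" using \<open>W \<noteq> 0\<close> Q by auto
  define m where "m j = mult_poly F ((G(i0 := P)) j)" for j
  have "[:B i0:] * W = wronskian (F * L) (G(i0 := P)) r"
    by (simp add: W_def q_def P wronskian_cramer[OF i0(1)])
  also have "F ^ (sum m {0..<r} + \<mu> * (r choose 2)) dvd \<dots>"
    using G_nz \<open>P \<noteq> 0\<close> by (intro power_dvd_wronskian[OF FL]) (simp add: m_def mult_poly_dvd[OF F])
  finally have "sum m {0..<r} + \<mu> * (r choose 2) \<le> mult_poly F ([:B i0:] * W)"
    using i0 \<open>W \<noteq> 0\<close> by (intro mult_poly_geI[OF F]) auto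
  also have "mult_poly F ([:B i0:] * W) = mult_poly F [:B i0:] + mult_poly F W"
    by (rule mult_poly_mult[OF F]) (use i0 \<open>W \<noteq> 0\<close> in auto)
  also have "mult_poly F W = mult_poly F (prod G {0..<r}) + mult_poly F Q"
    unfolding Q by (rule mult_poly_mult[OF F]) (use G_nz \<open>Q \<noteq> 0\<close> in auto)
  finally have "sum m {0..<r} + \<mu> * (r choose 2) \<le> (\<Sum>j = 0..<r. mult_poly F (G j)) + mult_poly F Q"
    using mult_poly_le_degree[OF F, of "[:B i0:]"] i0 mult_poly_prod[OF F, of "{0..<r}" G] G_nz
    by simp
  moreover have "sum m {0..<r} = mult_poly F P + (\<Sum>j\<in>{0..<r} - {i0}. mult_poly F (G j))"
    "(\<Sum>j = 0..<r. mult_poly F (G j)) = mult_poly F (G i0) + (\<Sum>j\<in>{0..<r} - {i0}. mult_poly F (G j))"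
    using i0 by (simp_all add: sum.remove[of "{0..<r}" i0] m_def)
  ultimately have mult_le: "mult_poly F P + \<mu> * (r choose 2) \<le> mult_poly F (G i0) + mult_poly F Q"
    by linarith
  have "degree W \<le> (\<Sum>j = 0..<r. degree (G j)) + (r choose 2) * (degree q - 1)"
    unfolding W_def by (rule degree_wronskian_le[OF \<open>degree q \<ge> 1\<close>])
  moreover have "degree W = (\<Sum>j = 0..<r. degree (G j)) + degree Q"
    using Q \<open>Q \<noteq> 0\<close> G_nz by (simp add: degree_mult_eq degree_prod_eq_sum_degree)
  ultimately have "degree F * mult_poly F Q \<le> (r choose 2) * (degree q - 1)"
    using degree_mult_poly_le[OF F \<open>Q \<noteq> 0\<close>] by (simp add: mult.commute)
  thus ?thesis
    using mult_le_mono2[OF mult_le, of "degree F"] deg_q by (simp add: distrib_left)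
qed

lemma dvd_const_mult_pderiv_imp_degree_0:
  fixes L :: "'a::field_char_0 poly"
  assumes "G dvd L * pderiv G" "L \<noteq> 0" "degree L = 0"
  shows "degree G = 0"
proof -
  have "coeff L 0 \<noteq> 0" using assms(2,3) by (metis leading_coeff_0_iff)
  moreover have "L * pderiv G = smult (coeff L 0) (pderiv G)"
    by (subst degree_0_id[OF assms(3), symmetric]) simp
  ultimately have "G dvd pderiv G" using assms(1) dvd_smult_cancel by metis
  thus ?thesis by simp
qed

lemma mult_poly_lin_indep_comb_le:
  fixes F L P :: "'a::field_char_0 poly" and G :: "'b \<Rightarrow> 'a poly"
  assumes F: "irreducible F" and FL: "F ^ \<mu> dvd L" and "L \<noteq> 0" and "finite S"
    and indep: "lin_indep_polys G S"
    and G_dvd: "\<And>j. j \<in> S \<Longrightarrow> G j dvd L * pderiv (G j)"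
    and G_nz: "\<And>j. j \<in> S \<Longrightarrow> G j \<noteq> 0"
    and P: "P = (\<Sum>j\<in>S. smult (B j) (G j))" and "j0 \<in> S" "B j0 \<noteq> 0" "P \<noteq> 0"
  shows "mult_poly F P + \<mu> * (card S choose 2) \<le> mult_poly F (G j0) + (card S choose 2) * degree L"
proof (cases "degree L = 0")
  case True
  have "\<mu> = 0"
    using irreducible_power_dvd_imp_le_degree[OF F \<open>L \<noteq> 0\<close> FL] True by simp
  moreover have "degree (G j) = 0" if "j \<in> S" for j
    using G_dvd[OF that] \<open>L \<noteq> 0\<close> True by (rule dvd_const_mult_pderiv_imp_degree_0)
  hence "degree P = 0"
    unfolding P using \<open>finite S\<close>
    by (intro degree_sum_le[THEN le_0_eq[THEN iffD1]]) (auto intro: order.trans[OF degree_smult_le])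
  hence "mult_poly F P = 0" using mult_poly_le_degree[OF F \<open>P \<noteq> 0\<close>] by simp
  ultimately show ?thesis by simp
next
  case False
  define r where "r = card S"
  obtain \<sigma> where \<sigma>: "bij_betw \<sigma> {..<r} S"
    using ex_bij_betw_nat_finite[OF \<open>finite S\<close>] by (auto simp: r_def atLeast0LessThan)
  have "j0 \<in> \<sigma> ` {..<r}" using \<sigma> \<open>j0 \<in> S\<close> by (simp add: bij_betw_def)
  then obtain i0 where i0: "i0 < r" "\<sigma> i0 = j0" by auto
  have \<sigma>_in: "\<sigma> i \<in> S" if "i < r" for i using bij_betwE[OF \<sigma>] that by simp
  have P': "P = (\<Sum>i<r. smult (B (\<sigma> i)) ((G \<circ> \<sigma>) i))"
    unfolding P using sum.reindex_bij_betw[OF \<sigma>, of "\<lambda>j. smult (B j) (G j)"] by simp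
  have "\<And>i. i < r \<Longrightarrow> (G \<circ> \<sigma>) i dvd L * pderiv ((G \<circ> \<sigma>) i)"
    "\<And>i. i < r \<Longrightarrow> (G \<circ> \<sigma>) i \<noteq> 0" "B (\<sigma> i0) \<noteq> 0"
    using G_dvd G_nz \<sigma>_in i0 \<open>B j0 \<noteq> 0\<close> by auto
  from mult_poly_wronskian_bound[OF F FL \<open>L \<noteq> 0\<close> lin_indep_polys_reindex[OF indep \<sigma>] this(1,2) P'
      i0(1) this(3) \<open>P \<noteq> 0\<close>]
  have "degree F * (mult_poly F P + \<mu> * (r choose 2))
      \<le> degree F * mult_poly F (G j0) + (r choose 2) * (degree F + degree L - 1)"
    using i0 by simp
  moreover have "degree F + degree L - 1 \<le> degree F * degree L"
    using irreducible_degree_pos[OF F] False by (cases "degree F"; cases "degree L") simp_all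
  hence "(r choose 2) * (degree F + degree L - 1) \<le> (r choose 2) * (degree F * degree L)"
    by (rule mult_le_mono2)
  ultimately have "degree F * (mult_poly F P + \<mu> * (r choose 2))
      \<le> degree F * (mult_poly F (G j0) + (r choose 2) * degree L)"
    by (simp add: algebra_simps)
  thus ?thesis using irreducible_degree_pos[OF F] by (simp add: r_def)
qed

lemma dvd_mult_pderiv_mult:
  fixes X Y L :: "'a::idom poly"
  assumes "X dvd L * pderiv X" "Y dvd L * pderiv Y"
  shows "X * Y dvd L * pderiv (X * Y)"
proof -
  have "X * Y dvd X * (L * pderiv Y)" by (rule mult_dvd_mono[OF dvd_refl assms(2)])
  moreover have "Y * X dvd Y * (L * pderiv X)" by (rule mult_dvd_mono[OF dvd_refl assms(1)])
  ultimately have "X * Y dvd X * (L * pderiv Y) + Y * (L * pderiv X)"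
    by (simp add: mult.commute[of Y X])
  thus ?thesis by (simp add: pderiv_mult algebra_simps)
qed

lemma dvd_mult_pderiv_power:
  fixes f L :: "'a::idom poly"
  assumes "f dvd L"
  shows "f ^ n dvd L * pderiv (f ^ n)"
proof (cases n)
  case (Suc k)
  have "f * f ^ k dvd L * (f ^ k * pderiv f)" using assms by (intro mult_dvd_mono) auto
  hence "f ^ Suc k dvd smult (of_nat (Suc k)) (L * (f ^ k * pderiv f))" by (simp add: dvd_smult)
  moreover have "L * pderiv (f ^ Suc k) = smult (of_nat (Suc k)) (L * (f ^ k * pderiv f))"
    by (simp only: pderiv_power_Suc mult_smult_left mult_smult_right)
  ultimately show ?thesis by (simp only: Suc)
qed simp

lemma dvd_mult_pderiv_prod_power:
  fixes f :: "'b \<Rightarrow> 'a::idom poly"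
  assumes "\<And>i. i \<in> S \<Longrightarrow> f i dvd L"
  shows "(\<Prod>i\<in>S. f i ^ a i) dvd L * pderiv (\<Prod>i\<in>S. f i ^ a i)"
  using assms
proof (induction S rule: infinite_finite_induct)
  case (insert x S)
  thus ?case by (simp add: dvd_mult_pderiv_mult dvd_mult_pderiv_power)
qed simp_all

lemma minimal_lin_indep_representation:
  fixes g :: "'b \<Rightarrow> 'a::field poly"
  assumes "finite A" "P = (\<Sum>j\<in>A. smult (a j) (g j))"
  obtains S b where "S \<subseteq> A" "P = (\<Sum>j\<in>S. smult (b j) (g j))" "\<And>j. j \<in> S \<Longrightarrow> b j \<noteq> 0"
    "lin_indep_polys g S"
proof -
  define R where "R = {S. S \<subseteq> A \<and> (\<exists>b. P = (\<Sum>j\<in>S. smult (b j) (g j)))}"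
  obtain S where "S \<in> R" and min: "\<And>S'. S' \<in> R \<Longrightarrow> card S \<le> card S'"
    using ex_has_least_nat[of "\<lambda>S. S \<in> R" A card] assms(2) by (auto simp: R_def)
  then obtain b where "S \<subseteq> A" and b: "P = (\<Sum>j\<in>S. smult (b j) (g j))" by (auto simp: R_def)
  have "finite S" using \<open>S \<subseteq> A\<close> assms(1) by (rule finite_subset)
  have no_zero_coeff: "b' j \<noteq> 0" if "j \<in> S" "P = (\<Sum>i\<in>S. smult (b' i) (g i))" for j b'
  proof
    assume "b' j = 0"
    hence "P = (\<Sum>i\<in>S - {j}. smult (b' i) (g i))"
      using that sum.remove[OF \<open>finite S\<close> \<open>j \<in> S\<close>, of "\<lambda>i. smult (b' i) (g i)"] by simp
    hence "card S \<le> card (S - {j})" using \<open>S \<subseteq> A\<close> by (intro min) (auto simp: R_def)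
    thus False using card_Diff1_less[OF \<open>finite S\<close> \<open>j \<in> S\<close>] by simp
  qed
  have "lin_indep_polys g S"
    unfolding lin_indep_polys_def
  proof (intro allI impI ballI, rule ccontr)
    fix c j assume c: "(\<Sum>i\<in>S. smult (c i) (g i)) = 0" and "j \<in> S" "c j \<noteq> 0"
    define b' where "b' i = b i - (b j / c j) * c i" for i
    have "(\<Sum>i\<in>S. smult (b' i) (g i))
        = (\<Sum>i\<in>S. smult (b i) (g i)) - smult (b j / c j) (\<Sum>i\<in>S. smult (c i) (g i))"
      by (simp add: b'_def smult_diff_left smult_sum_right sum_subtractf)
    hence "P = (\<Sum>i\<in>S. smult (b' i) (g i))" using b c by simp
    from no_zero_coeff[OF \<open>j \<in> S\<close> this] show False using \<open>c j \<noteq> 0\<close> by (simp add: b'_def)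
  qed
  with that \<open>S \<subseteq> A\<close> b no_zero_coeff show ?thesis by blast
qed

lemma mult_poly_comb_le_at_some_index:
  fixes F L P :: "'a::field_char_0 poly" and g :: "nat \<Rightarrow> 'a poly"
  assumes F: "irreducible F" and FL: "F ^ \<mu> dvd L" and "L \<noteq> 0"
    and g_nz: "\<And>j. g j \<noteq> 0" and g_dvd: "\<And>j. g j dvd L * pderiv (g j)"
    and P: "P = (\<Sum>j=1..l. smult (a j) (g j))" and "P \<noteq> 0"
  obtains j0 where "j0 \<in> {1..l}"
    "mult_poly F P + \<mu> * ((l + 1 - j0) choose 2) \<le> mult_poly F (g j0) + ((l + 1 - j0) choose 2) * degree L"
proof -
  obtain S b where S: "S \<subseteq> {1..l}" "P = (\<Sum>j\<in>S. smult (b j) (g j))" "\<And>j. j \<in> S \<Longrightarrow> b j \<noteq> 0"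
    "lin_indep_polys g S"
    using minimal_lin_indep_representation[OF _ P] by blast
  have "finite S" "S \<noteq> {}" using S(1,2) \<open>P \<noteq> 0\<close> finite_subset by auto
  define j0 where "j0 = Min S"
  have "j0 \<in> S" "S \<subseteq> {j0..l}" using \<open>finite S\<close> \<open>S \<noteq> {}\<close> S(1) by (auto simp: j0_def)
  hence "card S \<le> card {j0..l}" by (intro card_mono) auto
  hence "card S choose 2 \<le> (l + 1 - j0) choose 2" by (simp add: binomial_right_mono)
  then obtain \<Delta> where \<Delta>: "(l + 1 - j0) choose 2 = (card S choose 2) + \<Delta>" using le_Suc_ex by blast
  have "mult_poly F P + \<mu> * (card S choose 2) \<le> mult_poly F (g j0) + (card S choose 2) * degree L"
    by (rule mult_poly_lin_indep_comb_le[OF F FL \<open>L \<noteq> 0\<close> \<open>finite S\<close> S(4) g_dvd g_nz S(2) \<open>j0 \<in> S\<close>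
          S(3)[OF \<open>j0 \<in> S\<close>] \<open>P \<noteq> 0\<close>])
  moreover have "\<mu> * \<Delta> \<le> \<Delta> * degree L"
    using irreducible_power_dvd_imp_le_degree[OF F \<open>L \<noteq> 0\<close> FL] by (simp add: mult.commute)
  ultimately have "mult_poly F P + \<mu> * ((l + 1 - j0) choose 2)
      \<le> mult_poly F (g j0) + ((l + 1 - j0) choose 2) * degree L"
    unfolding \<Delta> distrib_left distrib_right by linarith
  with that \<open>j0 \<in> S\<close> S(1) show ?thesis by blast
qed

theorem theorem2p6:
  fixes f :: "nat \<Rightarrow> 'a::field_char_0 poly"
    and alpha :: "nat \<Rightarrow> nat \<Rightarrow> nat"
    and a :: "nat \<Rightarrow> 'a"
    and m l :: nat
    and F P :: "'a poly"
  assumes f_nz: "\<And>i. i \<in> {1..m} \<Longrightarrow> f i \<noteq> 0"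
    and P_def: "P = (\<Sum>j=1..l. smult (a j) (\<Prod>i=1..m. f i ^ alpha i j))"
    and F_irr: "irreducible F"
    and P_nz: "P \<noteq> 0"
  shows "int (mult_poly F P) \<le>
    Max ((\<lambda>j. \<Sum>i=1..m. int (mult_poly F (f i)) * int (alpha i j)
               + (int (degree (f i)) - int (mult_poly F (f i))) * int ((l + 1 - j) choose 2)) ` {1..l})"
proof -
  define g where "g j = (\<Prod>i=1..m. f i ^ alpha i j)" for j
  define L where "L = (\<Prod>i=1..m. f i)"
  have "L \<noteq> 0" "\<And>j. g j \<noteq> 0" using f_nz by (auto simp: L_def g_def)
  have mult_L: "mult_poly F L = (\<Sum>i=1..m. mult_poly F (f i))"
    unfolding L_def by (rule mult_poly_prod[OF F_irr]) (use f_nz in auto)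
  have mult_g: "mult_poly F (g j) = (\<Sum>i=1..m. alpha i j * mult_poly F (f i))" for j
    unfolding g_def using f_nz by (subst mult_poly_prod[OF F_irr]) (auto simp: mult_poly_power[OF F_irr])
  have "\<And>j. g j dvd L * pderiv (g j)"
    unfolding g_def L_def by (rule dvd_mult_pderiv_prod_power) (auto intro: dvd_prodI)
  moreover have "P = (\<Sum>j=1..l. smult (a j) (g j))" using P_def by (simp add: g_def)
  ultimately obtain j0 where "j0 \<in> {1..l}" and bound: "mult_poly F P + mult_poly F L * ((l + 1 - j0) choose 2)
      \<le> mult_poly F (g j0) + ((l + 1 - j0) choose 2) * degree L"
    by (rule mult_poly_comb_le_at_some_index[OF F_irr mult_poly_dvd[OF F_irr \<open>L \<noteq> 0\<close>] \<open>L \<noteq> 0\<close>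
        \<open>\<And>j. g j \<noteq> 0\<close> _ _ P_nz])
  have "degree L = (\<Sum>i=1..m. degree (f i))"
    using f_nz by (simp add: L_def degree_prod_eq_sum_degree)
  from bound have "int (mult_poly F P) \<le> int (mult_poly F (g j0))
      + int ((l + 1 - j0) choose 2) * (int (degree L) - int (mult_poly F L))"
    by (simp add: algebra_simps flip: of_nat_mult of_nat_add)
  also have "\<dots> = (\<Sum>i=1..m. int (mult_poly F (f i)) * int (alpha i j0)
      + (int (degree (f i)) - int (mult_poly F (f i))) * int ((l + 1 - j0) choose 2))"
    by (simp add: mult_L mult_g \<open>degree L = _\<close> sum.distrib sum_subtractf sum_distrib_right
        sum_distrib_left right_diff_distrib mult.commute)
  also have "\<dots> \<le> Max ((\<lambda>j. \<Sum>i=1..m. int (mult_poly F (f i)) * int (alpha i j)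
      + (int (degree (f i)) - int (mult_poly F (f i))) * int ((l + 1 - j) choose 2)) ` {1..l})"
    using \<open>j0 \<in> {1..l}\<close> by (intro Max_ge) auto
  finally show ?thesis .
qed

end
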